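(* Let $\mathcal{S}$ be a square-free staged tree and let $\mathcal{S}'$ be the staged tree obtained from $\mathcal{S}$ by a swap operator $\tau$. Let $\alpha>0$, let $\mathcal{D}=(N_\lambda)_{\lambda\in\Lambda(\mathcal{S})}$ be a complete data sample on $\mathcal{S}$, and let $\mathcal{D}'$ be the sample on $\mathcal{S}'$ with $N'_{\varphi(\lambda)}=N_\lambda$, where $\varphi:\Lambda(\mathcal{S})\to\Lambda(\mathcal{S}')$ is the bijection of root-to-leaf paths induced by $\tau$. Then $\mathrm{BDepu}(\mathcal{S},\mathcal{D};\alpha)=\mathrm{BDepu}(\mathcal{S}',\mathcal{D}';\alpha)$.
   Context: An event tree is a finite directed rooted tree whose edges are directed away from the root; nodes with no outgoing edges are leaves, all other nodes are situations. A staged tree $\mathcal{S}$ is an event tree together with a partition of its situations into stages $u_1,\dots,u_J$ such that all situations in $u_j$ have the same number $r_j$ of outgoing edges, labelled $1,\dots,r_j$ at each situation of $u_j$; the $k$-th edge of every situation in $u_j$ carries the same conditional transition probability $\theta_{jk}$. A staged tree is square-free if no two situations on the same root-to-leaf path lie in the same stage. $\Lambda(\mathcal{S})$ is the set of root-to-leaf paths and, for an edge $e$, $\Lambda(e)$ is the set of root-to-leaf paths containing $e$. Twin and swap: a twin around a stage $u$ is a subtree rooted at a situation $s_0$ with outgoing edges $e_{01},\dots,e_{0r_1}$ to children $s_{01},\dots,s_{0r_1}$, all of which lie in the same stage $u$ (each with $r_2$ outgoing edges $e_{k1},\dots,e_{kr_2}$ to nodes $s_{kt}$, the subleaves of the twin),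 so that all root-to-subleaf paths have exactly two edges. The swap of this twin replaces it by a twin rooted at $s_0'$ (in the place of $s_0$) with $r_2$ outgoing edges to children $s'_1,\dots,s'_{r_2}$, each having $r_1$ outgoing edges, the $k$-th edge of $s'_t$ leading to the node $s_{kt}$ together with the whole part of the tree below $s_{kt}$ unchanged; the new root $s_0'$ takes the role of a situation of stage $u$ (its $t$-th edge carrying the parameter of the $t$-th edge of $u$), and the new children $s'_t$ are placed in the stage of $s_0$ (their $k$-th edge carrying the parameter of the $k$-th edge of $s_0$). This induces a bijection between root-to-leaf paths (the path through $e_{0k},e_{kt}$ corresponds to the path through the $t$-th root edge and the $k$-th edge of $s'_t$). A swap operator between staged trees is a finite composition of such swaps of single twins. A complete data sample $\mathcal{D}$ assigns to each root-to-leaf path $\lambda$ a number $N_\lambda\ge 0$ of units. For stage $u_j$, $n_{jk}$ is the number of units whose path passes through the $k$-th outgoing edge of some situation in $u_j$, $\overline{n}_j=\sum_k n_{jk}$. The BDepu score with imaginary sample size $\alpha>0$ is $$\mathrm{BDepu}(\mathcal{S},\mathcal{D};\alpha)=\prod_{j=1}^{J}\left[\frac{\Gamma(\overline{\alpha}_j)}{\Gamma(\overline{\alpha}_j+\overline{n}_j)}\prod_{k=1}^{r_j}\frac{\Gamma(\alpha_{jk}+n_{jk})}{\Gamma(\alpha_{jk})}\right],\quad \alpha_{jk}=\frac{\alpha}{|\Lambda(\mathcal{S})|}\sum_{m=1}^{h_j}|\Lambda(e^m_{jk})|,\quad \overline{\alpha}_j=\sum_{k=1}^{r_j}\alpha_{jk},$$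 where $h_j$ is the number of situations in $u_j$ and $e^m_{jk}$ is the $k$-th outgoing edge of the $m$-th situation of $u_j$. *)

theory Defs
  imports "HOL-Analysis.Analysis"
begin

text \<open>A node is either a leaf or a situation carrying its stage label
  and the ordered list of its children; the k-th child (0-based) is the target of the
  k-th outgoing edge. Stages are the classes of situations with the same label.
  Positions of nodes are lists of child indices (the root is []).\<close>

datatype 'a stree = Leaf | Sit 'a "'a stree list"

fun subtree :: "'a stree \<Rightarrow> nat list \<Rightarrow> 'a stree option" where
  "subtree t [] = Some t"
| "subtree Leaf (i # p) = None"
| "subtree (Sit u cs) (i # p) = (if i < length cs then subtree (cs ! i) p else None)"

definition staged_tree :: "'a stree \<Rightarrow> bool" where
  "staged_tree S \<longleftrightarrow>
     (\<forall>p u cs. subtree S p = Some (Sit u cs) \<longrightarrow> cs \<noteq> []) \<and>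
     (\<forall>p q u cs ds. subtree S p = Some (Sit u cs) \<longrightarrow> subtree S q = Some (Sit u ds)
        \<longrightarrow> length cs = length ds)"

definition square_free :: "'a stree \<Rightarrow> bool" where
  "square_free S \<longleftrightarrow>
     (\<forall>p r u cs ds. r \<noteq> [] \<longrightarrow> subtree S p = Some (Sit u cs) \<longrightarrow>
        subtree S (p @ r) = Some (Sit u ds) \<longrightarrow> False)"

text \<open>Root-to-leaf paths, identified with the positions of the leaves.\<close>
definition paths :: "'a stree \<Rightarrow> nat list set" where
  "paths S = {l. subtree S l = Some Leaf}"

definition stages :: "'a stree \<Rightarrow> 'a set" where
  "stages S = {u. \<exists>p cs. subtree S p = Some (Sit u cs)}"

definition sits_in :: "'a stree \<Rightarrow> 'a \<Rightarrow> nat list set" where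
  "sits_in S u = {p. \<exists>cs. subtree S p = Some (Sit u cs)}"

definition nch :: "'a stree \<Rightarrow> nat list \<Rightarrow> nat" where
  "nch S p = (case subtree S p of Some (Sit u cs) \<Rightarrow> length cs | _ \<Rightarrow> 0)"

definition stage_r :: "'a stree \<Rightarrow> 'a \<Rightarrow> nat" where
  "stage_r S u = nch S (SOME p. p \<in> sits_in S u)"

definition paths_edge :: "'a stree \<Rightarrow> nat list \<Rightarrow> nat \<Rightarrow> nat list set" where
  "paths_edge S p k = {l \<in> paths S. \<exists>q. l = p @ k # q}"

definition n_cnt :: "'a stree \<Rightarrow> (nat list \<Rightarrow> nat) \<Rightarrow> 'a \<Rightarrow> nat \<Rightarrow> real" where
  "n_cnt S N u k = (\<Sum>l\<in>{l \<in> paths S. \<exists>p\<in>sits_in S u. \<exists>q. l = p @ k # q}. real (N l))"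

definition alpha_jk :: "'a stree \<Rightarrow> real \<Rightarrow> 'a \<Rightarrow> nat \<Rightarrow> real" where
  "alpha_jk S \<alpha> u k = \<alpha> / real (card (paths S)) * (\<Sum>p\<in>sits_in S u. real (card (paths_edge S p k)))"

definition BDepu :: "'a stree \<Rightarrow> (nat list \<Rightarrow> nat) \<Rightarrow> real \<Rightarrow> real" where
  "BDepu S N \<alpha> = (\<Prod>u\<in>stages S.
      let r = stage_r S u;
          ab = (\<Sum>k<r. alpha_jk S \<alpha> u k);
          nb = (\<Sum>k<r. n_cnt S N u k)
      in Gamma ab / Gamma (ab + nb) *
         (\<Prod>k<r. Gamma (alpha_jk S \<alpha> u k + n_cnt S N u k) / Gamma (alpha_jk S \<alpha> u k)))"

fun kids :: "'a stree \<Rightarrow> 'a stree list" where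
  "kids Leaf = []"
| "kids (Sit u cs) = cs"

definition is_twin :: "'a stree \<Rightarrow> bool" where
  "is_twin t \<longleftrightarrow> (\<exists>v cs u r2. t = Sit v cs \<and> cs \<noteq> [] \<and>
      (\<forall>c\<in>set cs. \<exists>ds. c = Sit u ds \<and> length ds = r2))"

definition swap_twin :: "'a stree \<Rightarrow> 'a stree" where
  "swap_twin t = (case t of
      Sit v cs \<Rightarrow> (case hd cs of
          Sit u ds0 \<Rightarrow> Sit u (map (\<lambda>i. Sit v (map (\<lambda>c. kids c ! i) cs)) [0..<length ds0])
        | Leaf \<Rightarrow> t)
    | Leaf \<Rightarrow> t)"

fun upd_at :: "nat list \<Rightarrow> ('a stree \<Rightarrow> 'a stree) \<Rightarrow> 'a stree \<Rightarrow> 'a stree" where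
  "upd_at [] f t = f t"
| "upd_at (i # p) f Leaf = Leaf"
| "upd_at (i # p) f (Sit u cs) =
     (if i < length cs then Sit u (cs[i := upd_at p f (cs ! i)]) else Sit u cs)"

text \<open>Path bijection induced by swapping the twin at position p:
  p @ k # t # rest  \<mapsto>  p @ t # k # rest; other paths unchanged.\<close>
definition swap_path :: "nat list \<Rightarrow> nat list \<Rightarrow> nat list" where
  "swap_path p l = (if (\<exists>k t q. l = p @ k # t # q)
     then p @ [l ! (length p + 1), l ! length p] @ drop (length p + 2) l else l)"

text \<open>A swap operator: a finite sequence of single-twin swaps at given positions.\<close>
fun valid_swaps :: "nat list list \<Rightarrow> 'a stree \<Rightarrow> bool" where
  "valid_swaps [] S = True"
| "valid_swaps (p # ps) S =
     ((\<exists>t. subtree S p = Some t \<and> is_twin t) \<and> valid_swaps ps (upd_at p swap_twin S))"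

fun swap_op :: "nat list list \<Rightarrow> 'a stree \<Rightarrow> 'a stree" where
  "swap_op [] S = S"
| "swap_op (p # ps) S = swap_op ps (upd_at p swap_twin S)"

fun swap_op_path :: "nat list list \<Rightarrow> nat list \<Rightarrow> nat list" where
  "swap_op_path [] l = l"
| "swap_op_path (p # ps) l = swap_op_path ps (swap_path p l)"

end

(* A swap only exchanges the two levels of a twin.  Hence it changes no situation's pair
   (stage, number of children), it preserves square-freeness, and the induced involution of
   root-to-leaf paths maps, for every stage u and edge label k, the set of paths through the
   k-th edge of some situation of stage u onto the corresponding set of the swapped tree.
   In a square-free tree these sets are disjoint unions of the sets Lambda(e) over the
   situations of u, so alpha_jk is alpha times their size over |Lambda|, and n_jk counts the
   units on them; the BDepu score is therefore invariant under the swap. *)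

theory Submission
  imports Defs "HOL-Library.Sublist"
begin

text \<open>Swapping a twin changes the subtrees at all ancestors of the twin, but not their
  shapes, so the swap is described and analysed through shapes.\<close>
datatype 'a node_shape = No_Node | Leaf_Node | Sit_Node 'a nat

definition shape_at :: "'a stree \<Rightarrow> nat list \<Rightarrow> 'a node_shape" where
  "shape_at S x = (case subtree S x of
     None \<Rightarrow> No_Node
   | Some Leaf \<Rightarrow> Leaf_Node
   | Some (Sit u cs) \<Rightarrow> Sit_Node u (length cs))"

lemma shape_at_Nil: "shape_at (Sit u cs) [] = Sit_Node u (length cs)"
  by (simp add: shape_at_def)

lemma shape_at_Cons:
  "shape_at (Sit u cs) (j # x) = (if j < length cs then shape_at (cs ! j) x else No_Node)"
  by (simp add: shape_at_def)

lemma subtree_append: "subtree t (x @ y) = Option.bind (subtree t x) (\<lambda>s. subtree s y)"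
  by (induction t x rule: subtree.induct) auto

lemma shape_at_append: "subtree S x = Some t \<Longrightarrow> shape_at S (x @ y) = shape_at t y"
  by (simp add: shape_at_def subtree_append)

lemma shape_at_append_present: "shape_at S (x @ y) \<noteq> No_Node \<Longrightarrow> shape_at S x \<noteq> No_Node"
  by (cases "subtree S x") (auto simp: shape_at_def subtree_append split: stree.splits)

lemma shape_at_eq_Leaf_Node_iff: "shape_at S x = Leaf_Node \<longleftrightarrow> subtree S x = Some Leaf"
  by (auto simp: shape_at_def split: option.splits stree.splits)

lemma shape_at_eq_Sit_Node_iff:
  "shape_at S x = Sit_Node u n \<longleftrightarrow> (\<exists>cs. subtree S x = Some (Sit u cs) \<and> length cs = n)"
  by (auto simp: shape_at_def split: option.splits stree.splits)

lemma paths_shape_at: "paths S = {l. shape_at S l = Leaf_Node}"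
  by (simp add: paths_def shape_at_eq_Leaf_Node_iff)

lemma sits_in_shape_at: "sits_in S w = {x. \<exists>n. shape_at S x = Sit_Node w n}"
  by (auto simp: sits_in_def shape_at_eq_Sit_Node_iff)

lemma square_freeD:
  assumes "square_free S" "strict_prefix x y"
    and "shape_at S x = Sit_Node w n" "shape_at S y = Sit_Node w m"
  shows False
proof -
  obtain z zs where "y = x @ z # zs"
    using assms(2) by (rule strict_prefixE')
  with assms(1,3,4) show False
    unfolding square_free_def shape_at_eq_Sit_Node_iff by blast
qed

lemma square_freeI:
  assumes "\<And>x y w n m. strict_prefix x y \<Longrightarrow> shape_at S x = Sit_Node w n \<Longrightarrow>
    shape_at S y = Sit_Node w m \<Longrightarrow> False"
  shows "square_free S"
  unfolding square_free_def
proof (intro allI impI)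
  fix p r u cs ds
  assume "r \<noteq> []" "subtree S p = Some (Sit u cs)" "subtree S (p @ r) = Some (Sit u ds)"
  then show False
    using assms[of p "p @ r"] by (auto simp: shape_at_eq_Sit_Node_iff strict_prefix_def)
qed

lemma finite_positions: "finite {x. subtree t x \<noteq> None}"
proof (induction t)
  case Leaf
  have "{x. subtree Leaf x \<noteq> None} \<subseteq> {[]}"
    by (auto elim: subtree.elims)
  then show ?case
    by (rule finite_subset) simp
next
  case (Sit u cs)
  have "{x. subtree (Sit u cs) x \<noteq> None} \<subseteq>
      {[]} \<union> (\<Union>i<length cs. (Cons i) ` {x. subtree (cs ! i) x \<noteq> None})"
  proof
    fix x
    assume "x \<in> {x. subtree (Sit u cs) x \<noteq> None}"
    then show "x \<in> {[]} \<union> (\<Union>i<length cs. (Cons i) ` {x. subtree (cs ! i) x \<noteq> None})"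
      by (cases x) (auto split: if_splits)
  qed
  then show ?case
    by (rule finite_subset) (use Sit in auto)
qed

lemma finite_paths: "finite (paths S)"
  by (rule finite_subset[OF _ finite_positions[of S]]) (auto simp: paths_def)

lemma finite_sits_in: "finite (sits_in S w)"
  by (rule finite_subset[OF _ finite_positions[of S]]) (auto simp: sits_in_def)

definition sit_shapes :: "'a stree \<Rightarrow> ('a \<times> nat) set" where
  "sit_shapes S = {(w, n). \<exists>x. shape_at S x = Sit_Node w n}"

lemma stages_eq_sit_shapes: "stages S = fst ` sit_shapes S"
  by (force simp: stages_def sit_shapes_def shape_at_eq_Sit_Node_iff)

lemma staged_tree_iff_sit_shapes:
  "staged_tree S \<longleftrightarrow> (\<forall>(w, n)\<in>sit_shapes S. 0 < n) \<and>
     (\<forall>(w, n)\<in>sit_shapes S. \<forall>(w', m)\<in>sit_shapes S. w = w' \<longrightarrow> n = m)"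
  unfolding staged_tree_def sit_shapes_def shape_at_eq_Sit_Node_iff by blast

lemma stage_r_eq:
  assumes "staged_tree S" and "(w, n) \<in> sit_shapes S"
  shows "stage_r S w = n"
proof -
  have "sits_in S w \<noteq> {}"
    using assms(2) by (auto simp: sit_shapes_def sits_in_shape_at)
  then have "(SOME x. x \<in> sits_in S w) \<in> sits_in S w"
    by (simp add: some_in_eq)
  then obtain m where m: "shape_at S (SOME x. x \<in> sits_in S w) = Sit_Node w m"
    by (auto simp: sits_in_shape_at)
  then have "m = n"
    using assms unfolding staged_tree_iff_sit_shapes sit_shapes_def by blast
  with m show ?thesis
    by (simp add: stage_r_def nch_def shape_at_def split: option.splits stree.splits)
qed

definition stage_edge_paths :: "'a stree \<Rightarrow> 'a \<Rightarrow> nat \<Rightarrow> nat list set" where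
  "stage_edge_paths S w k = {l \<in> paths S. \<exists>x\<in>sits_in S w. \<exists>q. l = x @ k # q}"

lemma n_cnt_eq_sum: "n_cnt S N w k = (\<Sum>l\<in>stage_edge_paths S w k. real (N l))"
  by (simp add: n_cnt_def stage_edge_paths_def)

lemma sits_in_prefix_eq:
  assumes "square_free S" "x \<in> sits_in S w" "y \<in> sits_in S w" "prefix x y"
  shows "x = y"
proof (rule ccontr)
  assume "x \<noteq> y"
  with assms(4) have "strict_prefix x y"
    by simp
  moreover obtain n m where "shape_at S x = Sit_Node w n" "shape_at S y = Sit_Node w m"
    using assms(2,3) by (auto simp: sits_in_shape_at)
  ultimately show False
    by (rule square_freeD[OF assms(1)])
qed

text \<open>Square-freeness makes the sets \<open>\<Lambda>(e)\<close> for the \<open>k\<close>-th edges of the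
  situations of one stage pairwise disjoint, so the sum in \<open>alpha_jk\<close> counts their union.\<close>
lemma alpha_jk_eq_card:
  assumes sf: "square_free S"
  shows "alpha_jk S \<alpha> w k = \<alpha> / real (card (paths S)) * real (card (stage_edge_paths S w k))"
proof -
  have union: "stage_edge_paths S w k = (\<Union>x\<in>sits_in S w. paths_edge S x k)"
    by (auto simp: stage_edge_paths_def paths_edge_def)
  have disjoint: "paths_edge S x k \<inter> paths_edge S y k = {}"
    if "x \<in> sits_in S w" "y \<in> sits_in S w" "x \<noteq> y" for x y
  proof (rule ccontr)
    assume "paths_edge S x k \<inter> paths_edge S y k \<noteq> {}"
    then obtain q q' where "x @ k # q = y @ k # q'"
      by (auto simp: paths_edge_def)
    then have "prefix x y \<or> prefix y x"
      by (metis prefixI prefix_same_cases)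
    then show False
      using sits_in_prefix_eq[OF sf] that by blast
  qed
  have "finite (paths_edge S x k)" for x
    by (rule finite_subset[OF _ finite_paths[of S]]) (auto simp: paths_edge_def)
  then have "card (stage_edge_paths S w k) = (\<Sum>x\<in>sits_in S w. card (paths_edge S x k))"
    unfolding union by (intro card_UN_disjoint finite_sits_in) (simp_all add: disjoint)
  then show ?thesis
    by (simp add: alpha_jk_def)
qed

lemma BDepu_eq_if_bij_betw_paths:
  assumes bij: "bij_betw f (paths S) (paths S')"
    and edges: "\<And>w k. f ` stage_edge_paths S w k = stage_edge_paths S' w k"
    and stages: "stages S' = stages S"
    and stage_r: "\<And>w. w \<in> stages S \<Longrightarrow> stage_r S' w = stage_r S w"
    and sf: "square_free S" and sf': "square_free S'"
    and N: "\<forall>l\<in>paths S. N' (f l) = N l"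
  shows "BDepu S N \<alpha> = BDepu S' N' \<alpha>"
proof -
  have inj: "inj_on f (stage_edge_paths S w k)" for w k
    using bij_betw_imp_inj_on[OF bij] by (rule inj_on_subset) (auto simp: stage_edge_paths_def)
  have "card (paths S') = card (paths S)"
    using bij_betw_same_card[OF bij] by simp
  moreover have "card (stage_edge_paths S' w k) = card (stage_edge_paths S w k)" for w k
    using card_image[OF inj, of w k] by (simp only: edges)
  ultimately have alpha: "alpha_jk S' \<alpha> w k = alpha_jk S \<alpha> w k" for w k
    by (simp add: alpha_jk_eq_card sf sf')
  have n: "n_cnt S' N' w k = n_cnt S N w k" for w k
  proof -
    have "n_cnt S' N' w k = (\<Sum>l\<in>f ` stage_edge_paths S w k. real (N' l))"
      by (simp add: n_cnt_eq_sum edges)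
    also have "\<dots> = (\<Sum>l\<in>stage_edge_paths S w k. real (N' (f l)))"
      by (simp add: sum.reindex[OF inj])
    also have "\<dots> = n_cnt S N w k"
      unfolding n_cnt_eq_sum using N by (intro sum.cong) (auto simp: stage_edge_paths_def)
    finally show ?thesis .
  qed
  show ?thesis
    unfolding BDepu_def stages by (intro prod.cong refl) (simp add: stage_r alpha n)
qed

lemma swap_path_append_Cons_Cons [simp]: "swap_path p (p @ i # j # q) = p @ j # i # q"
  by (auto simp: swap_path_def nth_append)

lemma swap_path_other: "\<not> (\<exists>i j q. l = p @ i # j # q) \<Longrightarrow> swap_path p l = l"
  by (simp add: swap_path_def)

lemma swap_path_swap_path [simp]: "swap_path p (swap_path p l) = l"
  by (cases "\<exists>i j q. l = p @ i # j # q") (auto simp: swap_path_other)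

lemma prefix_swap_path: "prefix y p \<Longrightarrow> prefix y l \<Longrightarrow> prefix y (swap_path p l)"
  by (cases "\<exists>i j q. l = p @ i # j # q") (auto simp: swap_path_other)

lemma bij_betw_swap_path:
  assumes "\<And>l. l \<in> A \<Longrightarrow> swap_path p l \<in> B" "\<And>l. l \<in> B \<Longrightarrow> swap_path p l \<in> A"
  shows "bij_betw (swap_path p) A B"
  using assms by (intro bij_betw_byWitness[where f' = "swap_path p"]) auto

lemma position_cases:
  obtains "x = p" | i where "x = p @ [i]" | i j z where "x = p @ i # j # z" | "\<not> prefix p x"
proof (cases "prefix p x")
  case True
  then obtain r where "x = p @ r"
    by (rule prefixE)
  then show ?thesis
    using that by (cases r; cases "tl r") auto
qed

locale twin_swap =
  fixes T T' :: "'a stree" and p :: "nat list" and u v :: 'a and r1 r2 :: nat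
  assumes degrees_pos: "0 < r1" "0 < r2"
    and shape_root: "shape_at T p = Sit_Node v r1" "shape_at T' p = Sit_Node u r2"
    and shape_child: "\<And>i. shape_at T (p @ [i]) = (if i < r1 then Sit_Node u r2 else No_Node)"
      "\<And>i. shape_at T' (p @ [i]) = (if i < r2 then Sit_Node v r1 else No_Node)"
    and shape_below: "\<And>i j z. shape_at T' (p @ i # j # z) = shape_at T (p @ j # i # z)"
    and shape_outside: "\<And>x. \<not> prefix p x \<Longrightarrow> shape_at T' x = shape_at T x"

lemma (in twin_swap) twin_swap_inverse: "twin_swap T' T p v u r2 r1"
  by unfold_locales (simp_all add: degrees_pos shape_root shape_child shape_below shape_outside)

sublocale twin_swap \<subseteq> inverse: twin_swap T' T p v u r2 r1
  by (rule twin_swap_inverse)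

context twin_swap
begin

lemma stages_distinct:
  assumes "square_free T"
  shows "u \<noteq> v"
proof
  assume "u = v"
  then have "shape_at T (p @ [0]) = Sit_Node v r2"
    using shape_child degrees_pos by simp
  moreover have "strict_prefix p (p @ [0])"
    by (simp add: strict_prefix_def)
  ultimately show False
    using square_freeD[OF assms _ shape_root(1)] by blast
qed

lemma swap_path_mem_paths:
  assumes "l \<in> paths T'"
  shows "swap_path p l \<in> paths T"
proof -
  have l: "shape_at T' l = Leaf_Node"
    using assms by (simp add: paths_shape_at)
  have "shape_at T (swap_path p l) = Leaf_Node"
  proof (cases l p rule: position_cases)
    case 4
    then have "\<not> (\<exists>i j q. l = p @ i # j # q)"
      by (auto simp: prefix_def)
    with 4 l show ?thesis
      by (simp add: swap_path_other shape_outside)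
  qed (use l shape_root shape_child shape_below in \<open>auto split: if_splits\<close>)
  then show ?thesis
    by (simp add: paths_shape_at)
qed

lemma sit_below_root_swapped:
  assumes "prefix p y" "shape_at T' y = Sit_Node w m"
  obtains y0 where "prefix p y0" "shape_at T y0 = Sit_Node w m"
proof (cases y p rule: position_cases)
  case 1
  then show ?thesis
    using that[of "p @ [0]"] assms(2) shape_root shape_child degrees_pos by simp
next
  case (2 i)
  then show ?thesis
    using that[of p] assms(2) shape_root shape_child by (simp split: if_splits)
next
  case (3 i j z)
  then show ?thesis
    using that[of "p @ j # i # z"] assms(2) shape_below by simp
next
  case 4
  then show ?thesis
    using assms(1) by contradiction
qed

lemma sit_shapes_swapped_subset: "sit_shapes T' \<subseteq> sit_shapes T"
proof
  fix s
  assume "s \<in> sit_shapes T'"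
  then obtain w n x where s: "s = (w, n)" and x: "shape_at T' x = Sit_Node w n"
    by (auto simp: sit_shapes_def)
  show "s \<in> sit_shapes T"
  proof (cases "prefix p x")
    case True
    then obtain x0 where "prefix p x0" "shape_at T x0 = Sit_Node w n"
      using x by (rule sit_below_root_swapped)
    then show ?thesis
      using s by (auto simp: sit_shapes_def)
  next
    case False
    then show ?thesis
      using s x shape_outside by (auto simp: sit_shapes_def)
  qed
qed

lemma swap_path_mem_stage_edge_paths:
  assumes "l \<in> stage_edge_paths T' w k"
  shows "swap_path p l \<in> stage_edge_paths T w k"
proof -
  obtain x q n where l: "l \<in> paths T'" "l = x @ k # q" and x: "shape_at T' x = Sit_Node w n"
    using assms by (auto simp: stage_edge_paths_def sits_in_shape_at)
  have path: "swap_path p l \<in> paths T"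
    using l(1) by (rule swap_path_mem_paths)
  have "\<exists>x0 q0 n0. shape_at T x0 = Sit_Node w n0 \<and> swap_path p l = x0 @ k # q0"
  proof (cases x p rule: position_cases)
    case 1
    obtain i q0 where q: "q = i # q0"
      using l shape_child(2)[of k] 1 by (cases q) (auto simp: paths_shape_at split: if_splits)
    have "shape_at T (p @ [i]) \<noteq> No_Node"
      using path l(2) 1 q shape_at_append_present[of T "p @ [i]" "k # q0"]
      by (simp add: paths_shape_at)
    then have "shape_at T (p @ [i]) = Sit_Node w r2"
      using x 1 shape_root by (simp add: shape_child split: if_splits)
    moreover have "swap_path p l = (p @ [i]) @ k # q0"
      using 1 l(2) q by simp
    ultimately show ?thesis
      by blast
  next
    case (2 i)
    then have "shape_at T p = Sit_Node w r1"
      using x shape_root shape_child by (simp split: if_splits)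
    moreover have "swap_path p l = p @ k # i # q"
      using 2 l(2) by simp
    ultimately show ?thesis
      by blast
  next
    case (3 i j z)
    then have "shape_at T (p @ j # i # z) = Sit_Node w n"
      using x shape_below by simp
    moreover have "swap_path p l = (p @ j # i # z) @ k # q"
      using 3 l(2) by simp
    ultimately show ?thesis
      by blast
  next
    case 4
    have "prefix (x @ [k]) (swap_path p l)"
    proof (cases "\<exists>i j q. l = p @ i # j # q")
      case True
      then have "prefix p l"
        by auto
      moreover have "prefix (x @ [k]) l"
        using l(2) by simp
      ultimately have "prefix p (x @ [k]) \<or> prefix (x @ [k]) p"
        by (rule prefix_same_cases)
      then have "prefix (x @ [k]) p"
        using 4 by (auto simp: prefix_snoc)
      then show ?thesis
        using \<open>prefix (x @ [k]) l\<close> by (rule prefix_swap_path)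
    qed (simp add: l(2) swap_path_other)
    then show ?thesis
      using x shape_outside[OF 4] by (auto simp: prefix_def)
  qed
  then show ?thesis
    using path by (auto simp: stage_edge_paths_def sits_in_shape_at)
qed

end

context twin_swap
begin

lemma bij_betw_swap_path_paths: "bij_betw (swap_path p) (paths T) (paths T')"
  by (intro bij_betw_swap_path inverse.swap_path_mem_paths swap_path_mem_paths)

lemma image_swap_path_stage_edge_paths:
  "swap_path p ` stage_edge_paths T w k = stage_edge_paths T' w k"
  by (intro bij_betw_imp_surj_on bij_betw_swap_path
      inverse.swap_path_mem_stage_edge_paths swap_path_mem_stage_edge_paths)

lemma sit_shapes_swapped: "sit_shapes T' = sit_shapes T"
  by (intro antisym sit_shapes_swapped_subset inverse.sit_shapes_swapped_subset)

lemma staged_tree_swapped: "staged_tree T \<Longrightarrow> staged_tree T'"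
  by (simp add: staged_tree_iff_sit_shapes sit_shapes_swapped)

lemma stages_swapped: "stages T' = stages T"
  by (simp add: stages_eq_sit_shapes sit_shapes_swapped)

lemma stage_r_swapped:
  assumes "staged_tree T" "w \<in> stages T"
  shows "stage_r T' w = stage_r T w"
proof -
  obtain n where "(w, n) \<in> sit_shapes T"
    using assms(2) by (auto simp: stages_eq_sit_shapes)
  then show ?thesis
    using stage_r_eq assms(1) staged_tree_swapped sit_shapes_swapped by metis
qed

lemma square_free_swapped_below_root:
  assumes sf: "square_free T" and "prefix p x" "strict_prefix x y"
    and x: "shape_at T' x = Sit_Node w n" and y: "shape_at T' y = Sit_Node w m"
  shows False
proof -
  obtain c cs where y_eq: "y = x @ c # cs"
    using assms(3) by (rule strict_prefixE')
  show False
  proof (cases x p rule: position_cases)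
    case 1
    then have w: "w = u"
      using x shape_root by simp
    show False
    proof (cases cs)
      case Nil
      then show False
        using y y_eq 1 w shape_child(2)[of c] stages_distinct[OF sf] by (simp split: if_splits)
    next
      case (Cons j z)
      then have y0: "shape_at T ((p @ [j]) @ c # z) = Sit_Node u m"
        using y y_eq 1 w shape_below by simp
      then have "shape_at T (p @ [j]) \<noteq> No_Node"
        using shape_at_append_present[of T "p @ [j]" "c # z"] by auto
      then have "shape_at T (p @ [j]) = Sit_Node u r2"
        using shape_child(1)[of j] by (simp split: if_splits)
      moreover have "strict_prefix (p @ [j]) ((p @ [j]) @ c # z)"
        by (simp add: strict_prefix_def)
      ultimately show False
        using square_freeD[OF sf _ _ y0] by blast
    qed
  next
    case (2 i)
    then have "shape_at T (p @ c # i # cs) = Sit_Node v m"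
      using x y y_eq shape_child shape_below by (simp split: if_splits)
    moreover have "strict_prefix p (p @ c # i # cs)"
      by (simp add: strict_prefix_def)
    ultimately show False
      using square_freeD[OF sf _ shape_root(1)] by blast
  next
    case (3 i j z)
    have "shape_at T (p @ j # i # z) = Sit_Node w n"
      using x 3 shape_below by simp
    moreover have "shape_at T ((p @ j # i # z) @ c # cs) = Sit_Node w m"
      using y y_eq 3 shape_below by simp
    moreover have "strict_prefix (p @ j # i # z) ((p @ j # i # z) @ c # cs)"
      by (simp add: strict_prefix_def)
    ultimately show False
      using square_freeD[OF sf] by blast
  qed (use assms(2) in contradiction)
qed

lemma square_free_swapped:
  assumes sf: "square_free T"
  shows "square_free T'"
proof (rule square_freeI)
  fix x y w n m
  assume xy: "strict_prefix x y"
    and x: "shape_at T' x = Sit_Node w n" and y: "shape_at T' y = Sit_Node w m"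
  show False
  proof (cases "prefix p x")
    case True
    then show False
      using square_free_swapped_below_root[OF sf _ xy x y] by blast
  next
    case False
    then have x0: "shape_at T x = Sit_Node w n"
      using x shape_outside by simp
    show False
    proof (cases "prefix p y")
      case True
      then obtain y0 where y0: "prefix p y0" "shape_at T y0 = Sit_Node w m"
        using y by (rule sit_below_root_swapped)
      have "prefix x y"
        using xy by (simp add: strict_prefix_def)
      then have "prefix x p \<or> prefix p x"
        using True by (rule prefix_same_cases)
      then have "strict_prefix x p"
        using False by (auto simp: strict_prefix_def)
      then have "strict_prefix x y0"
        using y0(1) by (rule prefix_order.less_le_trans)
      then show False
        using square_freeD[OF sf _ x0 y0(2)] by blast
    next
      case False
      then have "shape_at T y = Sit_Node w m"
        using y shape_outside by simp
      then show False
        using square_freeD[OF sf xy x0] by blast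
    qed
  qed
qed

lemma BDepu_swapped:
  assumes "staged_tree T" "square_free T" "\<forall>l\<in>paths T. N' (swap_path p l) = N l"
  shows "BDepu T N \<alpha> = BDepu T' N' \<alpha>"
  using bij_betw_swap_path_paths image_swap_path_stage_edge_paths stages_swapped
    stage_r_swapped[OF assms(1)] assms(2) square_free_swapped[OF assms(2)] assms(3)
  by (rule BDepu_eq_if_bij_betw_paths)

end

lemma subtree_upd_at:
  "subtree S p = Some t \<Longrightarrow> subtree (upd_at p f S) (p @ y) = subtree (f t) y"
proof (induction p arbitrary: S)
  case (Cons i p)
  then show ?case
    by (cases S) (auto split: if_splits)
qed simp

lemma shape_at_upd_at_outside: "\<not> prefix p x \<Longrightarrow> shape_at (upd_at p f S) x = shape_at S x"
proof (induction p arbitrary: S x)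
  case (Cons i p)
  then show ?case
    by (cases S; cases x) (auto simp: shape_at_Nil shape_at_Cons nth_list_update)
qed simp

lemma swap_twin_Sit:
  assumes "cs \<noteq> []" "\<forall>c\<in>set cs. \<exists>ds. c = Sit u ds \<and> length ds = r2"
  shows "swap_twin (Sit v cs) = Sit u (map (\<lambda>i. Sit v (map (\<lambda>c. kids c ! i) cs)) [0..<r2])"
proof -
  obtain ds where "hd cs = Sit u ds" "length ds = r2"
    using assms by (meson hd_in_set)
  then show ?thesis
    by (simp add: swap_twin_def)
qed

lemma twin_swap_upd_at:
  assumes st: "staged_tree S" and sub: "subtree S p = Some t" and twin: "is_twin t"
  obtains u v r1 r2 where "twin_swap S (upd_at p swap_twin S) p u v r1 r2"
proof -
  obtain v cs u r2 where t: "t = Sit v cs" and ne: "cs \<noteq> []"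
    and kids: "\<forall>c\<in>set cs. \<exists>ds. c = Sit u ds \<and> length ds = r2"
    using twin unfolding is_twin_def by blast
  have sub_twin: "subtree S p = Some (Sit v cs)"
    using sub t by simp
  have child: "shape_at (cs ! j) z = shape_at (Sit u (kids (cs ! j))) z"
    "length (kids (cs ! j)) = r2" if "j < length cs" for j z
    using kids nth_mem[OF that] by force+
  have shape_T: "shape_at S (p @ y) = shape_at (Sit v cs) y" for y
    using sub_twin by (rule shape_at_append)
  have shape_T': "shape_at (upd_at p swap_twin S) (p @ y) = shape_at (swap_twin (Sit v cs)) y" for y
    using subtree_upd_at[OF sub_twin] by (simp add: shape_at_def)
  have swap: "swap_twin (Sit v cs) = Sit u (map (\<lambda>i. Sit v (map (\<lambda>c. kids c ! i) cs)) [0..<r2])"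
    using ne kids by (rule swap_twin_Sit)
  have "shape_at S (p @ [0]) = Sit_Node u r2"
    using ne by (simp add: shape_T shape_at_Cons child shape_at_Nil)
  then have "0 < r2"
    using st unfolding staged_tree_iff_sit_shapes sit_shapes_def by blast
  have "twin_swap S (upd_at p swap_twin S) p u v (length cs) r2"
  proof
    show "0 < length cs" "0 < r2"
      using ne \<open>0 < r2\<close> by simp_all
    show "shape_at S p = Sit_Node v (length cs)" "shape_at (upd_at p swap_twin S) p = Sit_Node u r2"
      using shape_T[of "[]"] shape_T'[of "[]"] by (simp_all add: swap shape_at_Nil)
    show "shape_at S (p @ [i]) = (if i < length cs then Sit_Node u r2 else No_Node)"
      "shape_at (upd_at p swap_twin S) (p @ [i]) =
        (if i < r2 then Sit_Node v (length cs) else No_Node)" for i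
      by (simp_all add: shape_T shape_T' swap shape_at_Cons shape_at_Nil child)
    show "shape_at (upd_at p swap_twin S) (p @ i # j # z) = shape_at S (p @ j # i # z)" for i j z
      by (simp add: shape_T shape_T' swap shape_at_Cons child)
    show "\<not> prefix p x \<Longrightarrow> shape_at (upd_at p swap_twin S) x = shape_at S x" for x
      by (rule shape_at_upd_at_outside)
  qed
  then show ?thesis
    by (rule that)
qed

theorem lemma2:
  fixes S :: "'a stree" and ps :: "nat list list" and N N' :: "nat list \<Rightarrow> nat"
    and \<alpha> :: real
  assumes "staged_tree S" and "square_free S"
    and "valid_swaps ps S"
    and "\<alpha> > 0"
    and "\<forall>l\<in>paths S. N' (swap_op_path ps l) = N l"
  shows "BDepu S N \<alpha> = BDepu (swap_op ps S) N' \<alpha>"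
  using assms(1,2,3,5)
proof (induction ps arbitrary: S N)
  case Nil
  have "BDepu S N \<alpha> = BDepu S N' \<alpha>"
    using bij_betw_id by (rule BDepu_eq_if_bij_betw_paths) (use Nil.prems in auto)
  then show ?case
    by simp
next
  case (Cons p ps)
  obtain t where sub: "subtree S p = Some t" and twin: "is_twin t"
    and valid: "valid_swaps ps (upd_at p swap_twin S)"
    using Cons.prems(3) by auto
  obtain u v r1 r2 where "twin_swap S (upd_at p swap_twin S) p u v r1 r2"
    using twin_swap_upd_at[OF Cons.prems(1) sub twin] .
  then interpret twin_swap S "upd_at p swap_twin S" p u v r1 r2 .
  have "BDepu S N \<alpha> = BDepu (upd_at p swap_twin S) (\<lambda>l. N (swap_path p l)) \<alpha>"
    by (rule BDepu_swapped) (simp_all add: Cons.prems(1,2))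
  also have "\<dots> = BDepu (swap_op (p # ps) S) N' \<alpha>"
  proof -
    have "N' (swap_op_path ps l) = N (swap_path p l)" if "l \<in> paths (upd_at p swap_twin S)" for l
      using Cons.prems(4) swap_path_mem_paths[OF that] by fastforce
    then show ?thesis
      using Cons.IH[OF staged_tree_swapped[OF Cons.prems(1)] square_free_swapped[OF Cons.prems(2)] valid]
      by simp
  qed
  finally show ?case .
qed

end
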